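(* Let $\alpha>1$, $\delta\in(0,\alpha-1)$, $\tau\in(0,\alpha-1-\delta]$, $d\in\mathbb N$, $1\ge\gamma_1\ge\dots\ge\gamma_d>0$, and $g\in\mathcal A_{\alpha,\boldsymbol\gamma,d}$. Let $\boldsymbol x_1,\dots,\boldsymbol x_N\in[0,1]^d$, $c_1,\dots,c_N\in\mathbb R$. Let $L$ be a prime and $\mathcal Z=\{\boldsymbol z_0,\dots,\boldsymbol z_{L-1}\}$ a rank-1 lattice point set of size $L$ satisfying $e(H_{\beta,\boldsymbol\gamma,d},\mathcal Z)\le C_{\boldsymbol\gamma,d}(\beta,\tau')L^{-\beta+\tau'}$ for all $\tau'\in(0,\beta-\frac12]$, where $\beta=\alpha-\frac12-\delta$. Then for $m\in\mathbb N$, with $K=Q^\alpha_{m,\boldsymbol\gamma,d}$, $$\Big|\frac1N\sum_{n=1}^Nc_ng(\boldsymbol x_n)-\frac1L\sum_{\ell=0}^{L-1}g(\boldsymbol z_\ell)\phi_K(\boldsymbol z_\ell)\Big|\le\mathrm{err}_1(g,\mathcal C)+\mathrm{err}_2(g,\mathcal C)\le\|g\|_{\mathcal A_{\alpha,\boldsymbol\gamma,d}}\Big[\frac1{\sqrt{2^{m-d+1}}}+\frac{\sqrt{2^m}}{L^{\alpha-\frac12-\delta-\tau}}c_{\alpha,\boldsymbol\gamma,d}\,\zeta_{\delta,d}\,C_{\boldsymbol\gamma,d}\big(\alpha-\tfrac12-\delta,\tau\big)\Big]\overline\mu_N.$$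
   Context: $r_\beta(\gamma,h)=\max(|h|^{2\beta}/\gamma,1)$, $r_\beta(\boldsymbol\gamma,\boldsymbol k)=\prod_jr_\beta(\gamma_j,k_j)$; $\omega_{\boldsymbol k}(\boldsymbol x)=\exp(2\pi i\,\boldsymbol k\cdot\boldsymbol x)$, $\widehat f_{\boldsymbol k}=\int_{[0,1]^d}f\,\overline{\omega_{\boldsymbol k}}$. $\mathcal A_{\alpha,\boldsymbol\gamma,d}=\{f\in L_1([0,1]^d):\|f\|_{\mathcal A_{\alpha,\boldsymbol\gamma,d}}=\sum_{\boldsymbol k}\sqrt{r_\alpha(\boldsymbol\gamma,\boldsymbol k)}|\widehat f_{\boldsymbol k}|<\infty\}$; $H_{\beta,\boldsymbol\gamma,d}=\{f\in L_2:\|f\|^2_{H_{\beta,\boldsymbol\gamma,d}}=\sum_{\boldsymbol k}r_\beta(\boldsymbol\gamma,\boldsymbol k)|\widehat f_{\boldsymbol k}|^2<\infty\}$. Weighted step hyperbolic cross: $Q^\alpha_{m,\boldsymbol\gamma,d}=\bigcup_{\boldsymbol t\in\mathbb N_0^d,\|\boldsymbol t\|_1=m}\{\boldsymbol k\in\mathbb Z^d:r_\alpha(\gamma_j,k_j)\le2^{t_j}\ \forall j\}$. $\phi_K(\boldsymbol x)=\sum_{\boldsymbol k\in K}\check\phi_{\boldsymbol k}\overline{\omega_{\boldsymbol k}(\boldsymbol x)}$, $\check\phi_{\boldsymbol k}=\frac1N\sum_nc_n\omega_{\boldsymbol k}(\boldsymbol x_n)$; $\mathcal C=(c_n)$; $\mathrm{err}_1(g,\mathcal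 C)=|\frac1N\sum_nc_ng(\boldsymbol x_n)-\int g\phi_K|$, $\mathrm{err}_2(g,\mathcal C)=|\int g\phi_K-\frac1L\sum_\ell(g\phi_K)(\boldsymbol z_\ell)|$. Rank-1 lattice: $\{\boldsymbol z_\ell=(\ell\mathfrak g/L)\bmod1\}$, $\mathfrak g\in\{1,\dots,L-1\}^d$. $e(H_{\beta,\boldsymbol\gamma,d},\mathcal Z)=\sup_{\|f\|\le1}|\int f-\frac1L\sum_\ell f(\boldsymbol z_\ell)|$. $C_{\boldsymbol\gamma,d}(\beta,\tau)=2^{\beta-\tau}\prod_j[1+2\gamma_j^{1/(2(\beta-\tau))}\zeta(\frac\beta{\beta-\tau})]^{\beta-\tau}$; $\overline\mu_N=\frac1N\sum_n|c_n|$; $c_{\alpha,\boldsymbol\gamma,d}=\sqrt{\prod_j\max(1,2^{2\alpha}\gamma_j)}$; $\zeta_{\delta,d}=[1+2\zeta(1+2\delta)]^{d/2}$; $\zeta$ Riemann zeta. *)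

theory Defs
  imports "HOL-Analysis.Analysis" "HOL-Computational_Algebra.Primes"
begin

text \<open>Dimension d is CARD('n); coordinates j are indexed by the (linearly ordered) finite type 'n.\<close>

definition unit_cube :: "(real^'n::finite) set" where
  "unit_cube = cbox 0 One"

definition rzeta :: "real \<Rightarrow> real" where
  "rzeta s = (\<Sum>n. 1 / real (Suc n) powr s)"

definition rfun :: "real \<Rightarrow> real \<Rightarrow> int \<Rightarrow> real" where
  "rfun \<beta> \<gamma> h = max (\<bar>real_of_int h\<bar> powr (2 * \<beta>) / \<gamma>) 1"

definition rvec :: "real \<Rightarrow> ('n::finite \<Rightarrow> real) \<Rightarrow> int^'n \<Rightarrow> real" where
  "rvec \<beta> \<gamma> k = (\<Prod>j\<in>UNIV. rfun \<beta> (\<gamma> j) (k $ j))"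

definition omega :: "int^'n::finite \<Rightarrow> real^'n \<Rightarrow> complex" where
  "omega k x = exp (2 * complex_of_real pi * \<i> *
      complex_of_real (\<Sum>j\<in>UNIV. real_of_int (k $ j) * x $ j))"

definition fourier_coeff :: "(real^'n::finite \<Rightarrow> complex) \<Rightarrow> int^'n \<Rightarrow> complex" where
  "fourier_coeff f k = (LINT x : unit_cube | lborel. f x * cnj (omega k x))"

text \<open>The (continuous) representative: f equals its Fourier series pointwise on the cube.\<close>
definition fourier_rep :: "(real^'n::finite \<Rightarrow> complex) \<Rightarrow> bool" where
  "fourier_rep f \<longleftrightarrow> (\<forall>x\<in>unit_cube. f x = (\<Sum>\<^sub>\<infinity>k. fourier_coeff f k * omega k x))"

definition in_A :: "real \<Rightarrow> ('n::finite \<Rightarrow> real) \<Rightarrow> (real^'n \<Rightarrow> complex) \<Rightarrow> bool" where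
  "in_A \<alpha> \<gamma> f \<longleftrightarrow> set_integrable lborel unit_cube f \<and>
     (\<lambda>k. sqrt (rvec \<alpha> \<gamma> k) * cmod (fourier_coeff f k)) summable_on UNIV"

definition A_norm :: "real \<Rightarrow> ('n::finite \<Rightarrow> real) \<Rightarrow> (real^'n \<Rightarrow> complex) \<Rightarrow> real" where
  "A_norm \<alpha> \<gamma> f = (\<Sum>\<^sub>\<infinity>k. sqrt (rvec \<alpha> \<gamma> k) * cmod (fourier_coeff f k))"

definition in_H :: "real \<Rightarrow> ('n::finite \<Rightarrow> real) \<Rightarrow> (real^'n \<Rightarrow> complex) \<Rightarrow> bool" where
  "in_H \<beta> \<gamma> f \<longleftrightarrow> set_borel_measurable lborel unit_cube f \<and>
     set_integrable lborel unit_cube (\<lambda>x. (cmod (f x))^2) \<and>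
     (\<lambda>k. rvec \<beta> \<gamma> k * (cmod (fourier_coeff f k))^2) summable_on UNIV"

definition H_norm :: "real \<Rightarrow> ('n::finite \<Rightarrow> real) \<Rightarrow> (real^'n \<Rightarrow> complex) \<Rightarrow> real" where
  "H_norm \<beta> \<gamma> f = sqrt (\<Sum>\<^sub>\<infinity>k. rvec \<beta> \<gamma> k * (cmod (fourier_coeff f k))^2)"

definition wce :: "real \<Rightarrow> ('n::finite \<Rightarrow> real) \<Rightarrow> (nat \<Rightarrow> real^'n) \<Rightarrow> nat \<Rightarrow> ereal" where
  "wce \<beta> \<gamma> z L = (SUP f \<in> {f. in_H \<beta> \<gamma> f \<and> fourier_rep f \<and> H_norm \<beta> \<gamma> f \<le> 1}.
      ereal (cmod ((LINT x : unit_cube | lborel. f x) - (1 / of_nat L) * (\<Sum>l<L. f (z l)))))"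

definition lattice_pt :: "nat \<Rightarrow> nat^'n::finite \<Rightarrow> nat \<Rightarrow> real^'n" where
  "lattice_pt L gen l = (\<chi> j. frac (real l * real (gen $ j) / real L))"

definition Ccon :: "('n::finite \<Rightarrow> real) \<Rightarrow> real \<Rightarrow> real \<Rightarrow> real" where
  "Ccon \<gamma> \<beta> \<tau> = 2 powr (\<beta> - \<tau>) *
     (\<Prod>j\<in>UNIV. (1 + 2 * \<gamma> j powr (1 / (2 * (\<beta> - \<tau>))) * rzeta (\<beta> / (\<beta> - \<tau>))) powr (\<beta> - \<tau>))"

definition hypcross :: "real \<Rightarrow> ('n::finite \<Rightarrow> real) \<Rightarrow> nat \<Rightarrow> (int^'n) set" where
  "hypcross \<alpha> \<gamma> m = {k. \<exists>t::'n \<Rightarrow> nat. (\<Sum>j\<in>UNIV. t j) = m \<and>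
       (\<forall>j. rfun \<alpha> (\<gamma> j) (k $ j) \<le> 2 ^ (t j))}"

definition phi_check :: "nat \<Rightarrow> (nat \<Rightarrow> real) \<Rightarrow> (nat \<Rightarrow> real^'n::finite) \<Rightarrow> int^'n \<Rightarrow> complex" where
  "phi_check N c x k = (1 / of_nat N) * (\<Sum>n=1..N. complex_of_real (c n) * omega k (x n))"

definition phiK :: "(int^'n::finite) set \<Rightarrow> nat \<Rightarrow> (nat \<Rightarrow> real) \<Rightarrow> (nat \<Rightarrow> real^'n) \<Rightarrow> real^'n \<Rightarrow> complex" where
  "phiK K N c x y = (\<Sum>k\<in>K. phi_check N c x k * cnj (omega k y))"

definition err1 :: "(real^'n::finite \<Rightarrow> complex) \<Rightarrow> (int^'n) set \<Rightarrow> nat \<Rightarrow> (nat \<Rightarrow> real) \<Rightarrow> (nat \<Rightarrow> real^'n) \<Rightarrow> real" where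
  "err1 g K N c x = cmod ((1 / of_nat N) * (\<Sum>n=1..N. complex_of_real (c n) * g (x n))
      - (LINT y : unit_cube | lborel. g y * phiK K N c x y))"

definition err2 :: "(real^'n::finite \<Rightarrow> complex) \<Rightarrow> (int^'n) set \<Rightarrow> nat \<Rightarrow> (nat \<Rightarrow> real) \<Rightarrow> (nat \<Rightarrow> real^'n)
     \<Rightarrow> (nat \<Rightarrow> real^'n) \<Rightarrow> nat \<Rightarrow> real" where
  "err2 g K N c x z L = cmod ((LINT y : unit_cube | lborel. g y * phiK K N c x y)
      - (1 / of_nat L) * (\<Sum>l<L. g (z l) * phiK K N c x (z l)))"

definition mu_bar :: "nat \<Rightarrow> (nat \<Rightarrow> real) \<Rightarrow> real" where
  "mu_bar N c = (1 / real N) * (\<Sum>n=1..N. \<bar>c n\<bar>)"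

definition c_const :: "real \<Rightarrow> ('n::finite \<Rightarrow> real) \<Rightarrow> real" where
  "c_const \<alpha> \<gamma> = sqrt (\<Prod>j\<in>UNIV. max 1 (2 powr (2 * \<alpha>) * \<gamma> j))"

definition zeta_const :: "real \<Rightarrow> nat \<Rightarrow> real" where
  "zeta_const \<delta> d = (1 + 2 * rzeta (1 + 2 * \<delta>)) powr (real d / 2)"

end

theory Submission
  imports Defs
begin

(*
  Both estimates split the error at the exact integral I of g phi_K over the cube.

  err1: inserting the absolutely convergent Fourier series of g, the empirical average
  (1/N) sum_n c_n g(x_n) equals sum_k ghat_k phicheck_k, while I is the same sum restricted to
  k in K. Outside the step hyperbolic cross K the weight satisfies r_alpha(gamma,k) >= 2^(m-d+1),
  and |phicheck_k| <= mu_N, so the tail is at most ||g||_A mu_N / sqrt(2^(m-d+1)).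

  err2: the product g phi_K has Fourier coefficients sum_{k in K} phicheck_k ghat_{k+h}.
  Submultiplicativity r_alpha(h) <= c^2 r_alpha(h+k) r_alpha(k), together with r_alpha(k) <= 2^m
  on K and r_beta(gamma,h) r_{1/2+delta}(1,h) <= r_alpha(gamma,h) for beta = alpha - 1/2 - delta,
  bounds each weighted coefficient by mu_N c sqrt(2^m) ||g||_A / sqrt(r_{1/2+delta}(1,h)).
  The reciprocals of r_{1/2+delta}(1,.) sum to zeta_{delta,d}^2, hence
  ||g phi_K||_H <= mu_N c sqrt(2^m) ||g||_A zeta_{delta,d}, and the assumed worst-case error of
  the lattice rule in H_beta, applied to g phi_K, yields the second term.
*)

section \<open>Weights, characters and the kernel phi_K\<close>

lemma rfun_ge_1: "1 \<le> rfun \<beta> \<gamma> h"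
  by (simp add: rfun_def)

lemma rfun_nonneg: "0 \<le> rfun \<beta> \<gamma> h"
  using rfun_ge_1 [of \<beta> \<gamma> h] by linarith

lemma rvec_ge_1: "1 \<le> rvec \<beta> \<gamma> k"
  unfolding rvec_def by (rule prod_ge_1) (simp add: rfun_ge_1)

lemma rvec_nonneg: "0 \<le> rvec \<beta> \<gamma> k"
  using rvec_ge_1 [of \<beta> \<gamma> k] by linarith

lemma rfun_le_rvec: "rfun \<beta> (\<gamma> j) (k $ j) \<le> rvec \<beta> \<gamma> k"
  unfolding rvec_def
  using prod_mono2 [of UNIV "{j}" "\<lambda>j. rfun \<beta> (\<gamma> j) (k $ j)"] by (simp add: rfun_ge_1 rfun_nonneg)

lemma norm_omega [simp]: "cmod (omega k x) = 1"
  unfolding omega_def by simp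

lemma omega_add: "omega (k + h) x = omega k x * omega h x"
  unfolding omega_def by (simp add: exp_add [symmetric] sum.distrib algebra_simps)

lemma omega_zero [simp]: "omega 0 x = 1"
  by (simp add: omega_def)

lemma cnj_omega: "cnj (omega k x) = omega (- k) x"
  unfolding omega_def by (simp add: exp_cnj sum_negf)

lemma omega_mult_cnj [simp]: "omega k x * cnj (omega k x) = 1"
  using complex_norm_square [of "omega k x"] by simp

lemma borel_measurable_omega [measurable]: "omega k \<in> borel_measurable lborel"
  unfolding omega_def by measurable

lemma norm_phi_check_le: "cmod (phi_check N c x k) \<le> mu_bar N c"
proof -
  have "cmod (\<Sum>n=1..N. complex_of_real (c n) * omega k (x n)) \<le> (\<Sum>n=1..N. \<bar>c n\<bar>)"
    by (rule order_trans [OF norm_sum]) (simp add: norm_mult)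
  then show ?thesis
    unfolding phi_check_def mu_bar_def by (simp add: norm_mult norm_divide divide_right_mono)
qed

lemma mu_bar_nonneg: "0 \<le> mu_bar N c"
  unfolding mu_bar_def by (simp add: sum_nonneg)

lemma norm_phiK_le: "cmod (phiK K N c x y) \<le> (\<Sum>k\<in>K. cmod (phi_check N c x k))"
  unfolding phiK_def by (rule order_trans [OF norm_sum]) (simp add: norm_mult)

lemma borel_measurable_phiK [measurable]: "phiK K N c x \<in> borel_measurable lborel"
  unfolding phiK_def cnj_omega by measurable

section \<open>The step hyperbolic cross\<close>

lemma rvec_le_of_mem_hypcross:
  assumes "k \<in> hypcross \<alpha> \<gamma> m"
  shows "rvec \<alpha> \<gamma> k \<le> 2 ^ m"
proof -
  obtain t where t: "(\<Sum>j\<in>UNIV. t j) = m" "\<forall>j. rfun \<alpha> (\<gamma> j) (k $ j) \<le> 2 ^ t j"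
    using assms unfolding hypcross_def by blast
  have "rvec \<alpha> \<gamma> k \<le> (\<Prod>j\<in>UNIV. 2 ^ t j)"
    unfolding rvec_def by (rule prod_mono) (simp add: t(2) rfun_nonneg)
  also have "\<dots> = 2 ^ m"
    using t(1) by (simp add: power_sum [symmetric])
  finally show ?thesis .
qed

lemma mem_hypcross_of_le:
  fixes k :: "int^'n::finite"
  assumes "\<forall>j. rfun \<alpha> (\<gamma> j) (k $ j) \<le> 2 ^ s j" "(\<Sum>j\<in>UNIV. s j) \<le> m"
  shows "k \<in> hypcross \<alpha> \<gamma> m"
proof -
  \<comment> \<open>the slack \<open>m - sum s UNIV\<close> is put on an arbitrary coordinate\<close>
  define t where "t j = s j + (if j = undefined then m - sum s UNIV else 0)" for j
  have "(\<Sum>j\<in>UNIV. t j) = m"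
    using assms(2) by (simp add: t_def sum.distrib)
  moreover have "rfun \<alpha> (\<gamma> j) (k $ j) \<le> 2 ^ t j" for j
  proof -
    have "s j \<le> t j"
      by (simp add: t_def)
    then show ?thesis
      using assms(1) by (meson order_trans one_le_numeral power_increasing)
  qed
  ultimately show ?thesis
    unfolding hypcross_def by blast
qed

lemma abs_le_of_rfun_le:
  assumes "rfun \<alpha> \<gamma> h \<le> R" "0 < \<alpha>" "0 < \<gamma>"
  shows "\<bar>real_of_int h\<bar> \<le> (\<gamma> * R) powr (1 / (2 * \<alpha>))"
proof -
  have "\<bar>real_of_int h\<bar> powr (2 * \<alpha>) \<le> \<gamma> * R"
    using assms by (simp add: rfun_def pos_divide_le_eq mult.commute)
  then have "(\<bar>real_of_int h\<bar> powr (2 * \<alpha>)) powr (1 / (2 * \<alpha>)) \<le> (\<gamma> * R) powr (1 / (2 * \<alpha>))"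
    using assms by (intro powr_mono2) auto
  then show ?thesis
    using assms by (simp add: powr_powr)
qed

lemma finite_int_vec_box: "finite {k :: int^'n::finite. \<forall>j. \<bar>k $ j\<bar> \<le> M j}"
proof (rule finite_subset)
  show "{k :: int^'n. \<forall>j. \<bar>k $ j\<bar> \<le> M j} \<subseteq> (\<lambda>f. \<chi> j. f j) ` PiE UNIV (\<lambda>j. {- M j..M j})"
  proof
    fix k :: "int^'n"
    assume "k \<in> {k. \<forall>j. \<bar>k $ j\<bar> \<le> M j}"
    then have "(\<lambda>j. k $ j) \<in> PiE UNIV (\<lambda>j. {- M j..M j})"
      by (auto simp: abs_le_iff minus_le_iff)
    then show "k \<in> (\<lambda>f. \<chi> j. f j) ` PiE UNIV (\<lambda>j. {- M j..M j})"
      by (rule rev_image_eqI) simp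
  qed
qed (simp add: finite_PiE)

lemma finite_hypcross:
  assumes "0 < \<alpha>" "\<forall>j. 0 < \<gamma> j"
  shows "finite (hypcross \<alpha> \<gamma> m)"
proof (rule finite_subset)
  define M where "M j = \<lceil>(\<gamma> j * 2 ^ m) powr (1 / (2 * \<alpha>))\<rceil>" for j
  show "hypcross \<alpha> \<gamma> m \<subseteq> {k. \<forall>j. \<bar>k $ j\<bar> \<le> M j}"
  proof safe
    fix k j
    assume "k \<in> hypcross \<alpha> \<gamma> m"
    have "rfun \<alpha> (\<gamma> j) (k $ j) \<le> rvec \<alpha> \<gamma> k"
      by (rule rfun_le_rvec)
    also have "\<dots> \<le> 2 ^ m"
      using \<open>k \<in> hypcross \<alpha> \<gamma> m\<close> by (rule rvec_le_of_mem_hypcross)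
    finally have "\<bar>real_of_int (k $ j)\<bar> \<le> (\<gamma> j * 2 ^ m) powr (1 / (2 * \<alpha>))"
      using assms by (intro abs_le_of_rfun_le) auto
    then show "\<bar>k $ j\<bar> \<le> M j"
      unfolding M_def by (simp add: le_ceiling_iff)
  qed
qed (rule finite_int_vec_box)

lemma dyadic_bracket:
  fixes r :: real
  assumes "1 \<le> r"
  obtains s :: nat where "r \<le> 2 ^ s" "2 powr (real s - 1) \<le> r"
proof
  define s where "s = nat \<lceil>log 2 r\<rceil>"
  have "r = 2 powr (log 2 r)"
    using assms by simp
  also have "\<dots> \<le> 2 powr real s"
    using assms unfolding s_def by (intro powr_mono) auto
  finally show "r \<le> 2 ^ s"
    by (simp add: powr_realpow)
  have "real s = of_int \<lceil>log 2 r\<rceil>"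
    using assms unfolding s_def by simp
  then have "real s - 1 \<le> log 2 r"
    using ceiling_correct [of "log 2 r"] by linarith
  then have "2 powr (real s - 1) \<le> 2 powr (log 2 r)"
    by (intro powr_mono) auto
  then show "2 powr (real s - 1) \<le> r"
    using assms by simp
qed

lemma rvec_ge_of_not_mem_hypcross:
  fixes k :: "int^'n::finite"
  assumes "k \<notin> hypcross \<alpha> \<gamma> m"
  shows "2 powr (real m - real CARD('n) + 1) \<le> rvec \<alpha> \<gamma> k"
proof -
  have "\<exists>s. rfun \<alpha> (\<gamma> j) (k $ j) \<le> 2 ^ s \<and> 2 powr (real s - 1) \<le> rfun \<alpha> (\<gamma> j) (k $ j)" for j
    using dyadic_bracket [OF rfun_ge_1] by metis
  then obtain s where up: "\<forall>j. rfun \<alpha> (\<gamma> j) (k $ j) \<le> 2 ^ s j"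
    and lo: "\<And>j. 2 powr (real (s j) - 1) \<le> rfun \<alpha> (\<gamma> j) (k $ j)"
    by metis
  have "m < (\<Sum>j\<in>UNIV. s j)"
    using assms mem_hypcross_of_le [of \<alpha> \<gamma> k s m] up by (meson not_le)
  then have "real m - real CARD('n) + 1 \<le> (\<Sum>j\<in>UNIV. real (s j) - 1)"
    by (simp add: sum_subtractf flip: of_nat_sum)
  then have "2 powr (real m - real CARD('n) + 1) \<le> 2 powr (\<Sum>j\<in>UNIV. real (s j) - 1)"
    by simp
  also have "\<dots> = (\<Prod>j\<in>UNIV. 2 powr (real (s j) - 1))"
    by (simp add: powr_sum)
  also have "\<dots> \<le> rvec \<alpha> \<gamma> k"
    unfolding rvec_def by (rule prod_mono) (simp add: lo)
  finally show ?thesis .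
qed

section \<open>Submultiplicativity and decay of the weights\<close>

lemma c_const_nonneg: "0 \<le> c_const \<alpha> \<gamma>"
  unfolding c_const_def by (simp add: prod_nonneg)

lemma c_const_square: "(c_const \<alpha> \<gamma>)\<^sup>2 = (\<Prod>j\<in>UNIV. max 1 (2 powr (2 * \<alpha>) * \<gamma> j))"
  unfolding c_const_def by (simp add: prod_nonneg)

lemma abs_add_le_2_mult:
  fixes u v :: real
  assumes "1 \<le> \<bar>u\<bar>" "1 \<le> \<bar>v\<bar>"
  shows "\<bar>u + v\<bar> \<le> 2 * \<bar>u\<bar> * \<bar>v\<bar>"
proof -
  have "0 \<le> (\<bar>u\<bar> - 1) * (\<bar>v\<bar> - 1)"
    using assms by simp
  moreover have "1 \<le> \<bar>u\<bar> * \<bar>v\<bar>"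
    using assms by (rule mult_ge1_I)
  ultimately show ?thesis
    by (simp add: algebra_simps)
qed

lemma rfun_submult:
  assumes "0 \<le> \<alpha>" "0 < \<gamma>"
  shows "rfun \<alpha> \<gamma> h \<le> max 1 (2 powr (2 * \<alpha>) * \<gamma>) * rfun \<alpha> \<gamma> (h + k) * rfun \<alpha> \<gamma> k"
proof -
  define C where "C = max 1 (2 powr (2 * \<alpha>) * \<gamma>)"
  have "1 \<le> C"
    by (simp add: C_def)
  have le_C_mult: "y \<le> C * y" if "0 \<le> y" for y
    using \<open>1 \<le> C\<close> that by (simp add: mult_le_cancel_right1)
  consider "h + k = 0" | "k = 0" | "h + k \<noteq> 0" "k \<noteq> 0"
    by blast
  then have "rfun \<alpha> \<gamma> h \<le> C * rfun \<alpha> \<gamma> (h + k) * rfun \<alpha> \<gamma> k"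
  proof cases
    case 1
    then have "h = - k"
      by simp
    then have "rfun \<alpha> \<gamma> h = rfun \<alpha> \<gamma> k"
      by (simp add: rfun_def)
    moreover have "rfun \<alpha> \<gamma> (h + k) = 1"
      using 1 by (simp add: rfun_def)
    ultimately show ?thesis
      using le_C_mult [OF rfun_nonneg] by simp
  next
    case 2
    then show ?thesis
      using le_C_mult [OF rfun_nonneg] by (simp add: rfun_def)
  next
    case 3
    define u where "u = \<bar>real_of_int (h + k)\<bar>"
    define v where "v = \<bar>real_of_int k\<bar>"
    have "1 \<le> u" "1 \<le> v"
      using 3 by (auto simp: u_def v_def)
    have "\<bar>real_of_int h\<bar> \<le> 2 * u * v"
      using abs_add_le_2_mult [of "real_of_int (h + k)" "- real_of_int k"] 3
      by (simp add: u_def v_def)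
    then have "\<bar>real_of_int h\<bar> powr (2 * \<alpha>) \<le> (2 * u * v) powr (2 * \<alpha>)"
      using assms by (intro powr_mono2) auto
    also have "\<dots> = 2 powr (2 * \<alpha>) * u powr (2 * \<alpha>) * v powr (2 * \<alpha>)"
      using \<open>1 \<le> u\<close> \<open>1 \<le> v\<close> by (simp add: powr_mult)
    finally have "\<bar>real_of_int h\<bar> powr (2 * \<alpha>) / \<gamma>
        \<le> (2 powr (2 * \<alpha>) * \<gamma>) * (u powr (2 * \<alpha>) / \<gamma>) * (v powr (2 * \<alpha>) / \<gamma>)"
      using assms by (simp add: field_simps)
    also have "\<dots> \<le> C * rfun \<alpha> \<gamma> (h + k) * rfun \<alpha> \<gamma> k"
      using assms unfolding C_def rfun_def u_def v_def
      by (intro mult_mono) auto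
    finally have "\<bar>real_of_int h\<bar> powr (2 * \<alpha>) / \<gamma> \<le> C * rfun \<alpha> \<gamma> (h + k) * rfun \<alpha> \<gamma> k" .
    moreover have "1 \<le> C * rfun \<alpha> \<gamma> (h + k) * rfun \<alpha> \<gamma> k"
      using \<open>1 \<le> C\<close> by (intro mult_ge1_I rfun_ge_1)
    ultimately show ?thesis
      unfolding rfun_def [of \<alpha> \<gamma> h] by simp
  qed
  then show ?thesis
    by (simp add: C_def)
qed

lemma rvec_submult:
  fixes h k :: "int^'n::finite"
  assumes "0 \<le> \<alpha>" "\<forall>j. 0 < \<gamma> j"
  shows "rvec \<alpha> \<gamma> h \<le> (c_const \<alpha> \<gamma>)\<^sup>2 * rvec \<alpha> \<gamma> (h + k) * rvec \<alpha> \<gamma> k"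
proof -
  have "rvec \<alpha> \<gamma> h \<le> (\<Prod>j\<in>UNIV. max 1 (2 powr (2 * \<alpha>) * \<gamma> j)
      * rfun \<alpha> (\<gamma> j) ((h + k) $ j) * rfun \<alpha> (\<gamma> j) (k $ j))"
    unfolding rvec_def using assms by (intro prod_mono) (auto simp: rfun_nonneg rfun_submult)
  then show ?thesis
    unfolding c_const_square rvec_def by (simp add: prod.distrib)
qed

lemma rfun_mult_le:
  assumes "0 \<le> \<beta>" "0 \<le> \<sigma>" "0 < \<gamma>" "\<gamma> \<le> 1"
  shows "rfun \<beta> \<gamma> h * rfun \<sigma> 1 h \<le> rfun (\<beta> + \<sigma>) \<gamma> h"
proof (cases "h = 0")
  case False
  define u where "u = \<bar>real_of_int h\<bar>"
  have "1 \<le> u"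
    using False by (simp add: u_def)
  have "u powr (2 * \<sigma>) \<le> u powr (2 * (\<beta> + \<sigma>))"
    using \<open>1 \<le> u\<close> assms by (intro powr_mono) auto
  also have "\<dots> \<le> u powr (2 * (\<beta> + \<sigma>)) / \<gamma>"
    using assms by (simp add: le_divide_eq mult_left_le)
  finally have "u powr (2 * \<sigma>) \<le> u powr (2 * (\<beta> + \<sigma>)) / \<gamma>" .
  have "rfun \<sigma> 1 h = u powr (2 * \<sigma>)"
    using \<open>1 \<le> u\<close> assms by (simp add: rfun_def u_def [symmetric] ge_one_powr_ge_zero)
  then have "rfun \<beta> \<gamma> h * rfun \<sigma> 1 h = max (u powr (2 * (\<beta> + \<sigma>)) / \<gamma>) (u powr (2 * \<sigma>))"
    by (simp add: rfun_def u_def [symmetric] max_mult_distrib_right distrib_left powr_add)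
  also have "\<dots> \<le> rfun (\<beta> + \<sigma>) \<gamma> h"
    using \<open>u powr (2 * \<sigma>) \<le> u powr (2 * (\<beta> + \<sigma>)) / \<gamma>\<close> by (simp add: rfun_def u_def)
  finally show ?thesis .
qed (simp add: rfun_def)

lemma rvec_mult_le:
  assumes "0 \<le> \<beta>" "0 \<le> \<sigma>" "\<forall>j. 0 < \<gamma> j \<and> \<gamma> j \<le> 1"
  shows "rvec \<beta> \<gamma> h * rvec \<sigma> (\<lambda>_. 1) h \<le> rvec (\<beta> + \<sigma>) \<gamma> h"
  unfolding rvec_def prod.distrib [symmetric]
  using assms by (intro prod_mono) (auto simp: rfun_nonneg rfun_mult_le)

lemma rzeta_has_sum:
  assumes "1 < s"
  shows "((\<lambda>n::nat. 1 / real (Suc n) powr s) has_sum rzeta s) UNIV"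
proof -
  have "summable (\<lambda>n::nat. real n powr (- s))"
    using assms by (simp add: summable_real_powr_iff)
  then have "summable (\<lambda>n::nat. 1 / real (Suc n) powr s)"
    by (subst (asm) summable_Suc_iff [symmetric]) (simp add: powr_minus_divide)
  then have "(\<lambda>n::nat. 1 / real (Suc n) powr s) sums rzeta s"
    unfolding rzeta_def by (rule summable_sums)
  then show ?thesis
    by (rule sums_nonneg_imp_has_sum) simp
qed

lemma rzeta_nonneg: "1 < s \<Longrightarrow> 0 \<le> rzeta s"
  by (rule has_sum_nonneg [OF rzeta_has_sum]) auto

lemma inverse_rfun_has_sum:
  assumes "1 / 2 < \<sigma>"
  shows "((\<lambda>z::int. inverse (rfun \<sigma> 1 z)) has_sum (1 + 2 * rzeta (2 * \<sigma>))) UNIV"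
proof -
  define v where "v = (\<lambda>z::int. inverse (rfun \<sigma> 1 z))"
  have "v (int (Suc n)) = 1 / real (Suc n) powr (2 * \<sigma>)" for n
  proof -
    have "1 \<le> real (Suc n) powr (2 * \<sigma>)"
      using assms by (intro ge_one_powr_ge_zero) auto
    then show ?thesis
      by (simp add: v_def rfun_def max_def inverse_eq_divide)
  qed
  then have "((\<lambda>n. v (int (Suc n))) has_sum rzeta (2 * \<sigma>)) UNIV"
    using rzeta_has_sum [of "2 * \<sigma>"] assms by simp
  moreover have "bij_betw (\<lambda>n. int (Suc n)) UNIV {0<..}"
    by (rule bij_betwI [where g = "\<lambda>z. nat z - 1"]) auto
  ultimately have pos: "(v has_sum rzeta (2 * \<sigma>)) {0<..}"
    using has_sum_reindex_bij_betw [of "\<lambda>n. int (Suc n)" UNIV "{0<..}" v] by simp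
  have "bij_betw uminus {0<..} {..<0::int}"
    by (rule bij_betwI [where g = uminus]) auto
  moreover have "v (- z) = v z" for z
    by (simp add: v_def rfun_def)
  ultimately have neg: "(v has_sum rzeta (2 * \<sigma>)) {..<0}"
    using pos has_sum_reindex_bij_betw [of uminus "{0<..}" "{..<0::int}" v] by simp
  have "(v has_sum 1) {0}"
    by (rule has_sum_finiteI) (simp_all add: v_def rfun_def)
  then have "(v has_sum (1 + rzeta (2 * \<sigma>))) ({0} \<union> {0<..})"
    using pos by (rule has_sum_Un_disjoint) auto
  then have "(v has_sum (1 + rzeta (2 * \<sigma>) + rzeta (2 * \<sigma>))) ({0} \<union> {0<..} \<union> {..<0})"
    using neg by (rule has_sum_Un_disjoint) auto
  moreover have "{0} \<union> {0<..} \<union> {..<0::int} = UNIV"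
    by auto
  ultimately have "(v has_sum (1 + rzeta (2 * \<sigma>) + rzeta (2 * \<sigma>))) UNIV"
    by (simp only:)
  then show ?thesis
    unfolding v_def by (simp only: mult_2 add.assoc)
qed

lemma inverse_rvec_has_sum:
  assumes "1 / 2 < \<sigma>"
  shows "((\<lambda>h::int^'n::finite. inverse (rvec \<sigma> (\<lambda>_. 1) h))
           has_sum (1 + 2 * rzeta (2 * \<sigma>)) ^ CARD('n)) UNIV"
proof -
  define v where "v = (\<lambda>z::int. inverse (rfun \<sigma> 1 z))"
  define Z where "Z = 1 + 2 * rzeta (2 * \<sigma>)"
  define P where "P = PiE (UNIV :: 'n set) (\<lambda>_. UNIV :: int set)"
  have v: "(v has_sum Z) UNIV"
    unfolding v_def Z_def using assms by (rule inverse_rfun_has_sum)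
  have "(\<lambda>z. norm (v z)) = v"
    by (simp add: v_def fun_eq_iff rfun_nonneg)
  then have norm_v: "(\<lambda>z. norm (v z)) summable_on UNIV"
    using v unfolding summable_on_def by auto
  then have "Infinite_Set_Sum.abs_summable_on v UNIV"
    using abs_summable_equivalent by blast
  then have "Infinite_Set_Sum.abs_summable_on (\<lambda>p. \<Prod>j\<in>UNIV. v (p j)) P"
    unfolding P_def by (intro abs_summable_on_prod_PiE) auto
  then have "(\<lambda>p. \<Prod>j\<in>UNIV. v (p j)) summable_on P"
    using abs_summable_equivalent abs_summable_summable by blast
  moreover have "(\<Sum>\<^sub>\<infinity>p\<in>P. \<Prod>j\<in>UNIV. v (p j)) = Z ^ CARD('n)"
    unfolding P_def using infsum_prod_PiE_abs [of "UNIV :: 'n set" "\<lambda>_. v" "\<lambda>_. UNIV"] norm_v v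
    by (simp add: infsumI)
  ultimately have "((\<lambda>p. \<Prod>j\<in>UNIV. v (p j)) has_sum Z ^ CARD('n)) P"
    by (metis has_sum_infsum)
  moreover have "bij_betw vec_nth (UNIV :: (int^'n) set) P"
    unfolding P_def by (rule bij_betwI [where g = vec_lambda]) (auto simp: vec_eq_iff)
  ultimately have "((\<lambda>h::int^'n. \<Prod>j\<in>UNIV. v (h $ j)) has_sum Z ^ CARD('n)) UNIV"
    using has_sum_reindex_bij_betw [of vec_nth UNIV P "\<lambda>p. \<Prod>j\<in>UNIV. v (p j)"] by simp
  then show ?thesis
    unfolding rvec_def v_def Z_def by (simp add: prod_inversef [symmetric])
qed

section \<open>Fourier series and the product g phi_K\<close>

lemma has_sum_sum:
  fixes f :: "'i \<Rightarrow> 'a \<Rightarrow> 'b::topological_comm_monoid_add"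
  assumes "finite I" "\<And>i. i \<in> I \<Longrightarrow> (f i has_sum s i) A"
  shows "((\<lambda>x. \<Sum>i\<in>I. f i x) has_sum (\<Sum>i\<in>I. s i)) A"
  using assms
proof (induction I rule: finite_induct)
  case (insert i I)
  then show ?case
    by (simp add: has_sum_add)
qed simp

lemma set_integral_sum:
  fixes f :: "'i \<Rightarrow> 'a \<Rightarrow> 'b::{banach, second_countable_topology}"
  assumes "\<And>i. i \<in> I \<Longrightarrow> set_integrable M A (f i)"
  shows "(LINT x:A|M. (\<Sum>i\<in>I. f i x)) = (\<Sum>i\<in>I. (LINT x:A|M. f i x))"
  using assms unfolding set_lebesgue_integral_def set_integrable_def
  by (simp add: scaleR_sum_right integral_sum)

lemma set_integrable_imp_set_borel_measurable:
  "set_integrable M A f \<Longrightarrow> set_borel_measurable M A f"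
  unfolding set_integrable_def set_borel_measurable_def by (rule borel_measurable_integrable)

lemma set_integrable_mult_bounded:
  fixes f h :: "'a \<Rightarrow> complex"
  assumes "set_integrable M A f" "h \<in> borel_measurable M" "\<And>x. cmod (h x) \<le> B"
  shows "set_integrable M A (\<lambda>x. f x * h x)"
proof (rule set_integrable_bound [where f = "\<lambda>x. complex_of_real B * f x"])
  show "set_integrable M A (\<lambda>x. complex_of_real B * f x)"
    using assms(1) by simp
  have "(\<lambda>x. indicator A x *\<^sub>R f x) \<in> borel_measurable M"
    using set_integrable_imp_set_borel_measurable [OF assms(1)] unfolding set_borel_measurable_def .
  then have meas: "(\<lambda>x. (indicator A x *\<^sub>R f x) * h x) \<in> borel_measurable M"
    using assms(2) by (rule borel_measurable_times)
  have eq: "(\<lambda>x. indicator A x *\<^sub>R (f x * h x)) = (\<lambda>x. (indicator A x *\<^sub>R f x) * h x)"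
    by (simp add: fun_eq_iff)
  show "set_borel_measurable M A (\<lambda>x. f x * h x)"
    unfolding set_borel_measurable_def eq by (rule meas)
  show "AE x in M. x \<in> A \<longrightarrow> cmod (f x * h x) \<le> cmod (complex_of_real B * f x)"
  proof (intro AE_I2 impI)
    fix x
    have "0 \<le> B"
      using order_trans [OF norm_ge_zero assms(3)] .
    moreover have "cmod (f x) * cmod (h x) \<le> cmod (f x) * B"
      by (rule mult_left_mono [OF assms(3)]) simp
    ultimately show "cmod (f x * h x) \<le> cmod (complex_of_real B * f x)"
      by (simp add: norm_mult mult.commute)
  qed
qed

lemma set_integrable_norm_square:
  fixes f :: "'a \<Rightarrow> complex"
  assumes "set_integrable M A f" "\<And>y. y \<in> A \<Longrightarrow> cmod (f y) \<le> B"
  shows "set_integrable M A (\<lambda>y. (cmod (f y))\<^sup>2)"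
proof (rule set_integrable_bound [where f = "\<lambda>y. complex_of_real B * f y"])
  show "set_integrable M A (\<lambda>y. complex_of_real B * f y)"
    using assms(1) by simp
  have "(\<lambda>x. indicator A x *\<^sub>R f x) \<in> borel_measurable M"
    using set_integrable_imp_set_borel_measurable [OF assms(1)] unfolding set_borel_measurable_def .
  then have meas: "(\<lambda>x. (cmod (indicator A x *\<^sub>R f x))\<^sup>2) \<in> borel_measurable M"
    by measurable
  have eq: "(\<lambda>x. indicator A x *\<^sub>R (cmod (f x))\<^sup>2) = (\<lambda>x. (cmod (indicator A x *\<^sub>R f x))\<^sup>2)"
    by (simp add: fun_eq_iff split: split_indicator)
  show "set_borel_measurable M A (\<lambda>y. (cmod (f y))\<^sup>2)"
    unfolding set_borel_measurable_def eq by (rule meas)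
  show "AE x in M. x \<in> A \<longrightarrow> norm ((cmod (f x))\<^sup>2) \<le> cmod (complex_of_real B * f x)"
  proof (intro AE_I2 impI)
    fix x
    assume "x \<in> A"
    then have "0 \<le> B" "cmod (f x) * cmod (f x) \<le> B * cmod (f x)"
      using assms(2) order_trans [OF norm_ge_zero assms(2)] by (auto intro: mult_right_mono)
    then show "norm ((cmod (f x))\<^sup>2) \<le> cmod (complex_of_real B * f x)"
      by (simp add: norm_mult power2_eq_square)
  qed
qed

lemma summable_on_norm_fourier_coeff:
  assumes "in_A \<alpha> \<gamma> g"
  shows "(\<lambda>k. cmod (fourier_coeff g k)) summable_on UNIV"
proof (rule summable_on_comparison_test)
  show "(\<lambda>k. sqrt (rvec \<alpha> \<gamma> k) * cmod (fourier_coeff g k)) summable_on UNIV"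
    using assms unfolding in_A_def by simp
  show "cmod (fourier_coeff g k) \<le> sqrt (rvec \<alpha> \<gamma> k) * cmod (fourier_coeff g k)" for k
    using rvec_ge_1 [of \<alpha> \<gamma> k] by (simp add: mult_le_cancel_right1)
qed simp

lemma summable_on_norm_fourier_series:
  assumes "in_A \<alpha> \<gamma> g"
  shows "(\<lambda>k. norm (fourier_coeff g k * omega k y)) summable_on UNIV"
  using summable_on_norm_fourier_coeff [OF assms] by (simp add: norm_mult)

lemma fourier_series_has_sum:
  assumes "in_A \<alpha> \<gamma> g" "fourier_rep g" "y \<in> unit_cube"
  shows "((\<lambda>k. fourier_coeff g k * omega k y) has_sum g y) UNIV"
proof -
  have "g y = (\<Sum>\<^sub>\<infinity>k. fourier_coeff g k * omega k y)"
    using assms(2,3) unfolding fourier_rep_def by blast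
  then show ?thesis
    using has_sum_infsum [OF abs_summable_summable [OF summable_on_norm_fourier_series [OF assms(1)]]]
    by simp
qed

lemma norm_le_infsum_norm_fourier_coeff:
  assumes "in_A \<alpha> \<gamma> g" "fourier_rep g" "y \<in> unit_cube"
  shows "cmod (g y) \<le> (\<Sum>\<^sub>\<infinity>k. cmod (fourier_coeff g k))"
proof -
  have "g y = (\<Sum>\<^sub>\<infinity>k. fourier_coeff g k * omega k y)"
    using assms(2,3) unfolding fourier_rep_def by blast
  then show ?thesis
    using norm_infsum_bound [OF summable_on_norm_fourier_series [OF assms(1)]] by (simp add: norm_mult)
qed

lemma fourier_coeff_cmult: "fourier_coeff (\<lambda>y. a * f y) k = a * fourier_coeff f k"
  unfolding fourier_coeff_def by (simp add: mult.assoc)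

lemma set_integrable_mult_cnj_omega:
  assumes "in_A \<alpha> \<gamma> g"
  shows "set_integrable lborel unit_cube (\<lambda>y. g y * cnj (omega k y))"
  unfolding cnj_omega using assms borel_measurable_omega norm_omega
  by (intro set_integrable_mult_bounded [where B = 1]) (simp_all add: in_A_def)

lemma set_integrable_mult_phiK:
  assumes "in_A \<alpha> \<gamma> g"
  shows "set_integrable lborel unit_cube (\<lambda>y. g y * phiK K N c x y)"
  using assms borel_measurable_phiK
  by (intro set_integrable_mult_bounded [OF _ _ norm_phiK_le]) (simp_all add: in_A_def)

lemma fourier_coeff_mult_phiK:
  assumes "in_A \<alpha> \<gamma> g"
  shows "fourier_coeff (\<lambda>y. g y * phiK K N c x y) h
           = (\<Sum>k\<in>K. phi_check N c x k * fourier_coeff g (k + h))"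
proof -
  have "fourier_coeff (\<lambda>y. g y * phiK K N c x y) h
      = (LINT y:unit_cube|lborel. (\<Sum>k\<in>K. phi_check N c x k * (g y * cnj (omega (k + h) y))))"
    unfolding fourier_coeff_def phiK_def
    by (simp add: sum_distrib_left sum_distrib_right omega_add algebra_simps)
  also have "\<dots> = (\<Sum>k\<in>K. phi_check N c x k * fourier_coeff g (k + h))"
    unfolding fourier_coeff_def using set_integrable_mult_cnj_omega [OF assms]
    by (simp add: set_integral_sum)
  finally show ?thesis .
qed

lemma set_integral_mult_phiK:
  assumes "in_A \<alpha> \<gamma> g"
  shows "(LINT y:unit_cube|lborel. g y * phiK K N c x y) = (\<Sum>k\<in>K. fourier_coeff g k * phi_check N c x k)"
  using fourier_coeff_mult_phiK [OF assms, of K N c x 0]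
  by (simp add: fourier_coeff_def mult.commute)

lemma fourier_rep_mult_phiK:
  fixes g :: "real^'n::finite \<Rightarrow> complex"
  assumes "in_A \<alpha> \<gamma> g" "fourier_rep g" "finite K"
  shows "fourier_rep (\<lambda>y. g y * phiK K N c x y)"
  unfolding fourier_rep_def
proof
  fix y :: "real^'n"
  assume y: "y \<in> unit_cube"
  have "((\<lambda>h. fourier_coeff g (k + h) * omega h y) has_sum g y * cnj (omega k y)) UNIV" for k
  proof -
    have "bij_betw (\<lambda>h. k + h) UNIV UNIV"
      by (rule bij_betwI [where g = "\<lambda>j. j - k"]) auto
    then have "((\<lambda>h. fourier_coeff g (k + h) * omega (k + h) y) has_sum g y) UNIV"
      using fourier_series_has_sum [OF assms(1,2) y]
        has_sum_reindex_bij_betw [of "\<lambda>h. k + h" UNIV UNIV "\<lambda>j. fourier_coeff g j * omega j y"]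
      by simp
    then have "((\<lambda>h. cnj (omega k y) * (fourier_coeff g (k + h) * omega (k + h) y))
        has_sum cnj (omega k y) * g y) UNIV"
      by (rule has_sum_cmult_right)
    moreover have "cnj (omega k y) * (fourier_coeff g (k + h) * omega (k + h) y)
        = fourier_coeff g (k + h) * omega h y * (omega k y * cnj (omega k y))" for h
      by (simp add: omega_add algebra_simps)
    ultimately show ?thesis
      by (simp add: mult.commute)
  qed
  then have "((\<lambda>h. \<Sum>k\<in>K. phi_check N c x k * (fourier_coeff g (k + h) * omega h y))
      has_sum (\<Sum>k\<in>K. phi_check N c x k * (g y * cnj (omega k y)))) UNIV"
    by (intro has_sum_sum [OF assms(3)] has_sum_cmult_right)
  moreover have "(\<Sum>k\<in>K. phi_check N c x k * (fourier_coeff g (k + h) * omega h y))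
      = fourier_coeff (\<lambda>y. g y * phiK K N c x y) h * omega h y" for h
    unfolding fourier_coeff_mult_phiK [OF assms(1)] sum_distrib_right by (simp add: algebra_simps)
  moreover have "(\<Sum>k\<in>K. phi_check N c x k * (g y * cnj (omega k y))) = g y * phiK K N c x y"
    unfolding phiK_def by (simp add: sum_distrib_left algebra_simps)
  ultimately show "g y * phiK K N c x y = (\<Sum>\<^sub>\<infinity>h. fourier_coeff (\<lambda>y. g y * phiK K N c x y) h * omega h y)"
    by (simp add: infsumI)
qed

section \<open>The integration error err1\<close>

lemma norm_error_le_err1_add_err2:
  "cmod ((1 / of_nat N) * (\<Sum>n=1..N. complex_of_real (c n) * g (x n))
      - (1 / of_nat L) * (\<Sum>l<L. g (z l) * phiK K N c x (z l)))
     \<le> err1 g K N c x + err2 g K N c x z L"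
  unfolding err1_def err2_def by (rule norm_diff_triangle_le [OF order_refl order_refl])

lemma has_sum_fourier_coeff_mult_phi_check:
  assumes "in_A \<alpha> \<gamma> g" "fourier_rep g" "\<forall>n\<in>{1..N}. x n \<in> unit_cube"
  shows "((\<lambda>k. fourier_coeff g k * phi_check N c x k)
           has_sum (1 / of_nat N) * (\<Sum>n=1..N. complex_of_real (c n) * g (x n))) UNIV"
proof -
  have "((\<lambda>k. \<Sum>n=1..N. complex_of_real (c n) * (fourier_coeff g k * omega k (x n)))
      has_sum (\<Sum>n=1..N. complex_of_real (c n) * g (x n))) UNIV"
    using assms by (intro has_sum_sum has_sum_cmult_right fourier_series_has_sum) auto
  then have "((\<lambda>k. (1 / of_nat N) * (\<Sum>n=1..N. complex_of_real (c n) * (fourier_coeff g k * omega k (x n))))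
      has_sum (1 / of_nat N) * (\<Sum>n=1..N. complex_of_real (c n) * g (x n))) UNIV"
    by (rule has_sum_cmult_right)
  moreover have "(1 / of_nat N) * (\<Sum>n=1..N. complex_of_real (c n) * (fourier_coeff g k * omega k (x n)))
      = fourier_coeff g k * phi_check N c x k" for k
    unfolding phi_check_def by (simp add: sum_distrib_left algebra_simps)
  ultimately show ?thesis
    by simp
qed

lemma err1_le_tail:
  assumes "in_A \<alpha> \<gamma> g" "fourier_rep g" "\<forall>n\<in>{1..N}. x n \<in> unit_cube" "finite K"
  shows "err1 g K N c x \<le> mu_bar N c * (\<Sum>\<^sub>\<infinity>k\<in>-K. cmod (fourier_coeff g k))"
proof -
  define F where "F k = fourier_coeff g k * phi_check N c x k" for k
  define S where "S = (1 / of_nat N) * (\<Sum>n=1..N. complex_of_real (c n) * g (x n))"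
  have F_le: "norm (F k) \<le> mu_bar N c * cmod (fourier_coeff g k)" for k
  proof -
    have "cmod (fourier_coeff g k) * cmod (phi_check N c x k) \<le> cmod (fourier_coeff g k) * mu_bar N c"
      by (rule mult_left_mono [OF norm_phi_check_le norm_ge_zero])
    then show ?thesis
      unfolding F_def norm_mult by (simp add: mult.commute)
  qed
  have ghat: "(\<lambda>k. mu_bar N c * cmod (fourier_coeff g k)) summable_on -K"
    using summable_on_norm_fourier_coeff [OF assms(1)]
    by (intro summable_on_cmult_right, rule summable_on_subset) simp
  have F_summable: "(\<lambda>k. norm (F k)) summable_on -K"
    by (rule summable_on_comparison_test [OF ghat]) (simp_all add: F_le)
  have "(F has_sum S) UNIV"
    unfolding F_def S_def using assms(1-3) by (rule has_sum_fourier_coeff_mult_phi_check)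
  moreover have "(F has_sum (\<Sum>k\<in>K. F k)) K"
    using assms(4) by simp
  ultimately have "(F has_sum S - (\<Sum>k\<in>K. F k)) (-K)"
    unfolding Compl_eq_Diff_UNIV by (rule has_sum_Diff) simp
  then have "err1 g K N c x = cmod (\<Sum>\<^sub>\<infinity>k\<in>-K. F k)"
    unfolding err1_def set_integral_mult_phiK [OF assms(1)] F_def S_def by (simp add: infsumI)
  also have "\<dots> \<le> (\<Sum>\<^sub>\<infinity>k\<in>-K. norm (F k))"
    using F_summable by (rule norm_infsum_bound)
  also have "\<dots> \<le> (\<Sum>\<^sub>\<infinity>k\<in>-K. mu_bar N c * cmod (fourier_coeff g k))"
    using F_summable ghat F_le by (rule infsum_mono)
  also have "\<dots> = mu_bar N c * (\<Sum>\<^sub>\<infinity>k\<in>-K. cmod (fourier_coeff g k))"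
    by (rule infsum_cmult_right')
  finally show ?thesis .
qed

lemma infsum_norm_fourier_coeff_le:
  assumes "in_A \<alpha> \<gamma> g" "0 < P" "\<forall>k\<in>S. P \<le> rvec \<alpha> \<gamma> k"
  shows "(\<Sum>\<^sub>\<infinity>k\<in>S. cmod (fourier_coeff g k)) \<le> A_norm \<alpha> \<gamma> g / sqrt P"
proof -
  define a where "a k = sqrt (rvec \<alpha> \<gamma> k) * cmod (fourier_coeff g k)" for k
  have a: "a summable_on UNIV"
    using assms(1) unfolding in_A_def a_def by simp
  have a_nonneg: "0 \<le> a k" for k
    by (simp add: a_def rvec_nonneg)
  have "(\<Sum>\<^sub>\<infinity>k\<in>S. cmod (fourier_coeff g k)) \<le> (\<Sum>\<^sub>\<infinity>k\<in>S. inverse (sqrt P) * a k)"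
  proof (rule infsum_mono)
    show "(\<lambda>k. cmod (fourier_coeff g k)) summable_on S"
      using summable_on_norm_fourier_coeff [OF assms(1)] by (rule summable_on_subset) simp
    show "(\<lambda>k. inverse (sqrt P) * a k) summable_on S"
      by (rule summable_on_cmult_right, rule summable_on_subset [OF a]) simp
    show "cmod (fourier_coeff g k) \<le> inverse (sqrt P) * a k" if "k \<in> S" for k
    proof -
      have "sqrt P * cmod (fourier_coeff g k) \<le> a k"
        unfolding a_def using assms(3) that by (intro mult_right_mono) auto
      then show ?thesis
        using assms(2) by (simp add: field_simps)
    qed
  qed
  also have "\<dots> = inverse (sqrt P) * (\<Sum>\<^sub>\<infinity>k\<in>S. a k)"
    by (rule infsum_cmult_right')
  also have "\<dots> \<le> inverse (sqrt P) * (\<Sum>\<^sub>\<infinity>k. a k)"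
    using summable_on_subset [OF a] a a_nonneg assms(2)
    by (intro mult_left_mono infsum_mono2) auto
  also have "\<dots> = A_norm \<alpha> \<gamma> g / sqrt P"
    by (simp add: A_norm_def a_def divide_inverse mult.commute)
  finally show ?thesis .
qed

lemma err1_hypcross_le:
  fixes g :: "real^'n::finite \<Rightarrow> complex"
  assumes "0 < \<alpha>" "\<forall>j. 0 < \<gamma> j" "in_A \<alpha> \<gamma> g" "fourier_rep g" "\<forall>n\<in>{1..N}. x n \<in> unit_cube"
  shows "err1 g (hypcross \<alpha> \<gamma> m) N c x
           \<le> A_norm \<alpha> \<gamma> g / sqrt (2 powr (real m - real CARD('n) + 1)) * mu_bar N c"
proof -
  have "err1 g (hypcross \<alpha> \<gamma> m) N c x
      \<le> mu_bar N c * (\<Sum>\<^sub>\<infinity>k\<in>-hypcross \<alpha> \<gamma> m. cmod (fourier_coeff g k))"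
    using assms by (intro err1_le_tail finite_hypcross)
  also have "\<dots> \<le> mu_bar N c * (A_norm \<alpha> \<gamma> g / sqrt (2 powr (real m - real CARD('n) + 1)))"
    using assms(3) by (intro mult_left_mono infsum_norm_fourier_coeff_le)
      (auto simp: mu_bar_nonneg rvec_ge_of_not_mem_hypcross)
  finally show ?thesis
    by (simp add: mult.commute)
qed

section \<open>The quadrature error err2\<close>

lemma A_norm_nonneg: "0 \<le> A_norm \<alpha> \<gamma> g"
  unfolding A_norm_def by (rule infsum_nonneg) (simp add: rvec_nonneg)

lemma norm_fourier_coeff_mult_phiK_le:
  fixes g :: "real^'n::finite \<Rightarrow> complex"
  assumes "\<beta> + \<sigma> = \<alpha>" "0 \<le> \<beta>" "0 \<le> \<sigma>" "\<forall>j. 0 < \<gamma> j \<and> \<gamma> j \<le> 1"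
    and "in_A \<alpha> \<gamma> g" "finite K" "0 \<le> R" "\<forall>k\<in>K. rvec \<alpha> \<gamma> k \<le> R"
  shows "sqrt (rvec \<beta> \<gamma> h * rvec \<sigma> (\<lambda>_. 1) h) * cmod (fourier_coeff (\<lambda>y. g y * phiK K N c x y) h)
           \<le> mu_bar N c * c_const \<alpha> \<gamma> * sqrt R * A_norm \<alpha> \<gamma> g"
proof -
  define a where "a = (\<lambda>k. sqrt (rvec \<alpha> \<gamma> k) * cmod (fourier_coeff g k))"
  define W where "W = sqrt (rvec \<beta> \<gamma> h * rvec \<sigma> (\<lambda>_. 1) h)"
  define C where "C = c_const \<alpha> \<gamma> * sqrt R"
  have "0 \<le> W" "0 \<le> C"
    by (simp_all add: W_def C_def rvec_nonneg c_const_nonneg assms(7))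
  have shift: "W * cmod (fourier_coeff g (k + h)) \<le> C * a (k + h)" if "k \<in> K" for k
  proof -
    have "rvec \<beta> \<gamma> h * rvec \<sigma> (\<lambda>_. 1) h \<le> rvec \<alpha> \<gamma> h"
      using rvec_mult_le [OF assms(2-4)] assms(1) by blast
    also have "\<dots> \<le> (c_const \<alpha> \<gamma>)\<^sup>2 * rvec \<alpha> \<gamma> (h + k) * rvec \<alpha> \<gamma> k"
      using assms(1-4) by (intro rvec_submult) auto
    also have "\<dots> \<le> (c_const \<alpha> \<gamma>)\<^sup>2 * rvec \<alpha> \<gamma> (k + h) * R"
      using assms(8) that by (simp add: add.commute mult_left_mono rvec_nonneg)
    finally have "W \<le> sqrt ((c_const \<alpha> \<gamma>)\<^sup>2 * rvec \<alpha> \<gamma> (k + h) * R)"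
      unfolding W_def by (rule real_sqrt_le_mono)
    also have "\<dots> = C * sqrt (rvec \<alpha> \<gamma> (k + h))"
      unfolding C_def using c_const_nonneg [of \<alpha> \<gamma>] by (simp add: real_sqrt_mult mult_ac)
    finally have "W * cmod (fourier_coeff g (k + h)) \<le> C * sqrt (rvec \<alpha> \<gamma> (k + h)) * cmod (fourier_coeff g (k + h))"
      by (rule mult_right_mono) simp
    then show ?thesis
      unfolding a_def by (simp add: mult.assoc)
  qed
  have sum_a_le: "(\<Sum>k\<in>K. a (k + h)) \<le> A_norm \<alpha> \<gamma> g"
  proof -
    have "(\<Sum>k\<in>K. a (k + h)) = sum a ((\<lambda>k. k + h) ` K)"
      by (simp add: sum.reindex inj_on_def)
    also have "\<dots> \<le> (\<Sum>\<^sub>\<infinity>k. a k)"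
      using assms(5,6) by (intro finite_sum_le_infsum) (auto simp: in_A_def a_def rvec_nonneg)
    finally show ?thesis
      by (simp add: A_norm_def a_def)
  qed
  have "W * cmod (\<Sum>k\<in>K. phi_check N c x k * fourier_coeff g (k + h))
      \<le> W * (\<Sum>k\<in>K. mu_bar N c * cmod (fourier_coeff g (k + h)))"
    using \<open>0 \<le> W\<close> by (intro mult_left_mono order_trans [OF norm_sum] sum_mono)
      (auto simp: norm_mult intro!: mult_right_mono norm_phi_check_le)
  also have "\<dots> = mu_bar N c * (\<Sum>k\<in>K. W * cmod (fourier_coeff g (k + h)))"
    by (simp add: sum_distrib_left mult_ac)
  also have "\<dots> \<le> mu_bar N c * (\<Sum>k\<in>K. C * a (k + h))"
    using shift by (intro mult_left_mono sum_mono) (auto simp: mu_bar_nonneg)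
  also have "\<dots> \<le> mu_bar N c * C * A_norm \<alpha> \<gamma> g"
    using sum_a_le \<open>0 \<le> C\<close> by (simp add: sum_distrib_left [symmetric] mult.assoc mult_left_mono mu_bar_nonneg)
  finally show ?thesis
    unfolding fourier_coeff_mult_phiK [OF assms(5)] W_def C_def by (simp add: mult_ac)
qed

lemma weighted_fourier_coeff_mult_phiK_sum_le:
  fixes g :: "real^'n::finite \<Rightarrow> complex"
  assumes "\<beta> + 1 / 2 + \<delta> = \<alpha>" "0 \<le> \<beta>" "0 < \<delta>" "\<forall>j. 0 < \<gamma> j \<and> \<gamma> j \<le> 1"
    and "in_A \<alpha> \<gamma> g" "finite K" "0 \<le> R" "\<forall>k\<in>K. rvec \<alpha> \<gamma> k \<le> R"
  shows "(\<lambda>h. rvec \<beta> \<gamma> h * (cmod (fourier_coeff (\<lambda>y. g y * phiK K N c x y) h))\<^sup>2) summable_on UNIV"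
    and "(\<Sum>\<^sub>\<infinity>h. rvec \<beta> \<gamma> h * (cmod (fourier_coeff (\<lambda>y. g y * phiK K N c x y) h))\<^sup>2)
           \<le> (mu_bar N c * c_const \<alpha> \<gamma> * sqrt R * A_norm \<alpha> \<gamma> g)\<^sup>2
              * (1 + 2 * rzeta (1 + 2 * \<delta>)) ^ CARD('n)"
proof -
  define M where "M = mu_bar N c * c_const \<alpha> \<gamma> * sqrt R * A_norm \<alpha> \<gamma> g"
  define f where "f = (\<lambda>y. g y * phiK K N c x y)"
  define w :: "int^'n \<Rightarrow> real" where "w = rvec (1 / 2 + \<delta>) (\<lambda>_. 1)"
  have bound: "rvec \<beta> \<gamma> h * (cmod (fourier_coeff f h))\<^sup>2 \<le> M\<^sup>2 * inverse (w h)" for h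
  proof -
    have "sqrt (rvec \<beta> \<gamma> h * w h) * cmod (fourier_coeff f h) \<le> M"
      unfolding f_def w_def M_def using assms(1-8)
      by (intro norm_fourier_coeff_mult_phiK_le) auto
    then have "(sqrt (rvec \<beta> \<gamma> h * w h) * cmod (fourier_coeff f h))\<^sup>2 \<le> M\<^sup>2"
      by (rule power_mono) (simp add: w_def rvec_nonneg)
    moreover have "0 < w h"
      using rvec_ge_1 [of "1 / 2 + \<delta>" "\<lambda>_. 1" h] by (simp add: w_def)
    ultimately show ?thesis
      by (simp add: rvec_nonneg field_simps)
  qed
  have w: "((\<lambda>h. M\<^sup>2 * inverse (w h)) has_sum M\<^sup>2 * (1 + 2 * rzeta (1 + 2 * \<delta>)) ^ CARD('n)) UNIV"
    using inverse_rvec_has_sum [of "1 / 2 + \<delta>"] assms(3)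
    unfolding w_def by (intro has_sum_cmult_right) (simp add: algebra_simps)
  show summable: "(\<lambda>h. rvec \<beta> \<gamma> h * (cmod (fourier_coeff (\<lambda>y. g y * phiK K N c x y) h))\<^sup>2) summable_on UNIV"
    unfolding f_def [symmetric]
    by (rule summable_on_comparison_test [OF has_sum_imp_summable [OF w] bound]) (simp add: rvec_nonneg)
  show "(\<Sum>\<^sub>\<infinity>h. rvec \<beta> \<gamma> h * (cmod (fourier_coeff (\<lambda>y. g y * phiK K N c x y) h))\<^sup>2)
      \<le> (mu_bar N c * c_const \<alpha> \<gamma> * sqrt R * A_norm \<alpha> \<gamma> g)\<^sup>2
         * (1 + 2 * rzeta (1 + 2 * \<delta>)) ^ CARD('n)"
    unfolding f_def [symmetric] M_def [symmetric]
    using has_sum_infsum [OF summable [folded f_def]] w bound by (rule has_sum_mono)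
qed

lemma in_H_mult_phiK:
  fixes g :: "real^'n::finite \<Rightarrow> complex"
  assumes "\<beta> + 1 / 2 + \<delta> = \<alpha>" "0 \<le> \<beta>" "0 < \<delta>" "\<forall>j. 0 < \<gamma> j \<and> \<gamma> j \<le> 1"
    and "in_A \<alpha> \<gamma> g" "fourier_rep g" "finite K" "0 \<le> R" "\<forall>k\<in>K. rvec \<alpha> \<gamma> k \<le> R"
  shows "in_H \<beta> \<gamma> (\<lambda>y. g y * phiK K N c x y)"
proof -
  have int: "set_integrable lborel unit_cube (\<lambda>y. g y * phiK K N c x y)"
    using assms(5) by (rule set_integrable_mult_phiK)
  have "cmod (g y * phiK K N c x y)
      \<le> (\<Sum>\<^sub>\<infinity>k. cmod (fourier_coeff g k)) * (\<Sum>k\<in>K. cmod (phi_check N c x k))"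
    if "y \<in> unit_cube" for y
    unfolding norm_mult
    by (intro mult_mono norm_le_infsum_norm_fourier_coeff [OF assms(5,6) that] norm_phiK_le)
      (auto simp: infsum_nonneg)
  then show ?thesis
    unfolding in_H_def
    using set_integrable_imp_set_borel_measurable [OF int] set_integrable_norm_square [OF int]
      weighted_fourier_coeff_mult_phiK_sum_le(1) [OF assms(1-5,7-9)]
    by blast
qed

lemma H_norm_mult_phiK_le:
  fixes g :: "real^'n::finite \<Rightarrow> complex"
  assumes "\<beta> + 1 / 2 + \<delta> = \<alpha>" "0 \<le> \<beta>" "0 < \<delta>" "\<forall>j. 0 < \<gamma> j \<and> \<gamma> j \<le> 1"
    and "in_A \<alpha> \<gamma> g" "finite K" "0 \<le> R" "\<forall>k\<in>K. rvec \<alpha> \<gamma> k \<le> R"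
  shows "H_norm \<beta> \<gamma> (\<lambda>y. g y * phiK K N c x y)
           \<le> mu_bar N c * c_const \<alpha> \<gamma> * sqrt R * A_norm \<alpha> \<gamma> g * zeta_const \<delta> CARD('n)"
proof -
  define M where "M = mu_bar N c * c_const \<alpha> \<gamma> * sqrt R * A_norm \<alpha> \<gamma> g"
  define Z where "Z = 1 + 2 * rzeta (1 + 2 * \<delta>)"
  have "0 \<le> M"
    unfolding M_def using assms(7) by (simp add: mu_bar_nonneg c_const_nonneg A_norm_nonneg)
  have "0 < Z"
    unfolding Z_def using rzeta_nonneg [of "1 + 2 * \<delta>"] assms(3) by simp
  have "H_norm \<beta> \<gamma> (\<lambda>y. g y * phiK K N c x y) \<le> sqrt (M\<^sup>2 * Z ^ CARD('n))"
    unfolding H_norm_def M_def Z_def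
    using weighted_fourier_coeff_mult_phiK_sum_le(2) [OF assms] by (rule real_sqrt_le_mono)
  also have "\<dots> = M * zeta_const \<delta> CARD('n)"
    using \<open>0 \<le> M\<close> \<open>0 < Z\<close>
    by (simp add: zeta_const_def Z_def [symmetric] real_sqrt_mult powr_realpow [symmetric] powr_powr
        powr_half_sqrt [symmetric])
  finally show ?thesis
    unfolding M_def .
qed

lemma fourier_rep_cmult:
  assumes "fourier_rep f"
  shows "fourier_rep (\<lambda>y. a * f y)"
  using assms unfolding fourier_rep_def fourier_coeff_cmult
  by (simp add: infsum_cmult_right' mult.assoc)

lemma weighted_fourier_coeff_cmult:
  "rvec \<beta> \<gamma> k * (cmod (fourier_coeff (\<lambda>y. a * f y) k))\<^sup>2
     = (cmod a)\<^sup>2 * (rvec \<beta> \<gamma> k * (cmod (fourier_coeff f k))\<^sup>2)"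
  by (simp add: fourier_coeff_cmult norm_mult power_mult_distrib mult.left_commute)

lemma in_H_cmult:
  assumes "in_H \<beta> \<gamma> f"
  shows "in_H \<beta> \<gamma> (\<lambda>y. a * f y)"
proof -
  have "set_borel_measurable lborel unit_cube f"
    using assms by (simp add: in_H_def)
  then have "(\<lambda>y. a * (indicator unit_cube y *\<^sub>R f y)) \<in> borel_measurable lborel"
    unfolding set_borel_measurable_def by (rule borel_measurable_times [OF borel_measurable_const])
  moreover have "(\<lambda>y. indicator unit_cube y *\<^sub>R (a * f y)) = (\<lambda>y. a * (indicator unit_cube y *\<^sub>R f y))"
    by (simp add: fun_eq_iff)
  ultimately have "set_borel_measurable lborel unit_cube (\<lambda>y. a * f y)"
    unfolding set_borel_measurable_def by (simp only:)
  moreover have "(\<lambda>y. (cmod (a * f y))\<^sup>2) = (\<lambda>y. (cmod a)\<^sup>2 * (cmod (f y))\<^sup>2)"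
    by (simp add: norm_mult power_mult_distrib)
  ultimately show ?thesis
    using assms unfolding in_H_def by (simp add: weighted_fourier_coeff_cmult summable_on_cmult_right)
qed

lemma H_norm_cmult: "H_norm \<beta> \<gamma> (\<lambda>y. a * f y) = cmod a * H_norm \<beta> \<gamma> f"
  unfolding H_norm_def weighted_fourier_coeff_cmult by (simp add: infsum_cmult_right' real_sqrt_mult)

lemma quadrature_error_le_wce:
  assumes "in_H \<beta> \<gamma> f" "fourier_rep f" "H_norm \<beta> \<gamma> f \<le> 1"
  shows "ereal (cmod ((LINT y:unit_cube|lborel. f y) - (1 / of_nat L) * (\<Sum>l<L. f (z l))))
           \<le> wce \<beta> \<gamma> z L"
  unfolding wce_def using assms by (intro SUP_upper) simp

lemma quadrature_error_le:
  assumes "in_H \<beta> \<gamma> f" "fourier_rep f" "H_norm \<beta> \<gamma> f \<le> B" "wce \<beta> \<gamma> z L \<le> ereal W"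
  shows "cmod ((LINT y:unit_cube|lborel. f y) - (1 / of_nat L) * (\<Sum>l<L. f (z l))) \<le> B * W"
proof -
  define E where "E = cmod ((LINT y:unit_cube|lborel. f y) - (1 / of_nat L) * (\<Sum>l<L. f (z l)))"
  define H where "H = H_norm \<beta> \<gamma> f"
  have scaled: "s * E \<le> W" if "0 \<le> s" "s * H \<le> 1" for s :: real
  proof -
    have "ereal (cmod ((LINT y:unit_cube|lborel. of_real s * f y)
        - (1 / of_nat L) * (\<Sum>l<L. of_real s * f (z l)))) \<le> wce \<beta> \<gamma> z L"
      using assms(1,2) that unfolding H_def
      by (intro quadrature_error_le_wce in_H_cmult fourier_rep_cmult) (simp_all add: H_norm_cmult)
    also have "\<dots> \<le> ereal W"
      by (rule assms(4))
    finally have "cmod ((LINT y:unit_cube|lborel. of_real s * f y)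
        - (1 / of_nat L) * (\<Sum>l<L. of_real s * f (z l))) \<le> W"
      by simp
    moreover have "(LINT y:unit_cube|lborel. of_real s * f y) - (1 / of_nat L) * (\<Sum>l<L. of_real s * f (z l))
        = of_real s * ((LINT y:unit_cube|lborel. f y) - (1 / of_nat L) * (\<Sum>l<L. f (z l)))"
      by (simp add: sum_distrib_left [symmetric] algebra_simps)
    ultimately show ?thesis
      using that(1) unfolding E_def by (simp add: norm_mult)
  qed
  have "0 \<le> H"
    unfolding H_def H_norm_def by (simp add: infsum_nonneg rvec_nonneg)
  have "0 \<le> W"
    using scaled [of 0] by simp
  have "E \<le> H * W"
  proof (cases "H = 0")
    \<comment> \<open>if \<open>H = 0\<close>, every multiple of \<open>f\<close> is admissible in the supremum, which forces \<open>E = 0\<close>\<close>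
    case True
    have "E \<le> 0"
    proof (rule ccontr)
      assume "\<not> E \<le> 0"
      then have "(W + 1) / E * E \<le> W"
        using \<open>0 \<le> W\<close> True by (intro scaled) auto
      with \<open>\<not> E \<le> 0\<close> show False
        by simp
    qed
    then show ?thesis
      using True by simp
  next
    case False
    then have "1 / H * E \<le> W"
      using \<open>0 \<le> H\<close> by (intro scaled) auto
    then show ?thesis
      using False \<open>0 \<le> H\<close> by (simp add: field_simps)
  qed
  also have "\<dots> \<le> B * W"
    using assms(3) \<open>0 \<le> W\<close> unfolding H_def by (rule mult_right_mono)
  finally show ?thesis
    unfolding E_def .
qed

lemma err2_hypcross_le:
  fixes g :: "real^'n::finite \<Rightarrow> complex"
  assumes "\<beta> + 1 / 2 + \<delta> = \<alpha>" "0 \<le> \<beta>" "0 < \<delta>" "\<forall>j. 0 < \<gamma> j \<and> \<gamma> j \<le> 1"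
    and "in_A \<alpha> \<gamma> g" "fourier_rep g" "wce \<beta> \<gamma> z L \<le> ereal W"
  shows "err2 g (hypcross \<alpha> \<gamma> m) N c x z L
           \<le> mu_bar N c * c_const \<alpha> \<gamma> * sqrt (2 ^ m) * A_norm \<alpha> \<gamma> g * zeta_const \<delta> CARD('n) * W"
proof -
  define K where "K = hypcross \<alpha> \<gamma> m"
  have "finite K" and K_le: "\<forall>k\<in>K. rvec \<alpha> \<gamma> k \<le> 2 ^ m"
    using assms(1-4) by (auto simp: K_def finite_hypcross rvec_le_of_mem_hypcross)
  have "in_H \<beta> \<gamma> (\<lambda>y. g y * phiK K N c x y)"
    by (rule in_H_mult_phiK [OF assms(1-6) \<open>finite K\<close> _ K_le]) simp
  moreover have "fourier_rep (\<lambda>y. g y * phiK K N c x y)"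
    using assms(5,6) \<open>finite K\<close> by (rule fourier_rep_mult_phiK)
  moreover have "H_norm \<beta> \<gamma> (\<lambda>y. g y * phiK K N c x y)
      \<le> mu_bar N c * c_const \<alpha> \<gamma> * sqrt (2 ^ m) * A_norm \<alpha> \<gamma> g * zeta_const \<delta> CARD('n)"
    by (rule H_norm_mult_phiK_le [OF assms(1-5) \<open>finite K\<close> _ K_le]) simp
  ultimately show ?thesis
    unfolding err2_def K_def [symmetric] using assms(7) by (rule quadrature_error_le)
qed

theorem theorem3p20:
  fixes \<alpha> \<delta> \<tau> :: real
    and \<gamma> :: "'n::{finite,linorder} \<Rightarrow> real"
    and g :: "real^'n::{finite,linorder} \<Rightarrow> complex"
    and N :: nat and x :: "nat \<Rightarrow> real^'n::{finite,linorder}" and c :: "nat \<Rightarrow> real"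
    and L :: nat and gen :: "nat^'n::{finite,linorder}" and m :: nat
  assumes "\<alpha> > 1" and "0 < \<delta>" and "\<delta> < \<alpha> - 1"
    and "0 < \<tau>" and "\<tau> \<le> \<alpha> - 1 - \<delta>"
    and "\<forall>j. \<gamma> j \<le> 1" and "\<forall>i j. i \<le> j \<longrightarrow> \<gamma> j \<le> \<gamma> i" and "\<forall>j. 0 < \<gamma> j"
    and "in_A \<alpha> \<gamma> g" and "fourier_rep g"
    and "N > 0" and "\<forall>n\<in>{1..N}. x n \<in> unit_cube"
    and "prime L" and "\<forall>j. 1 \<le> gen $ j \<and> gen $ j \<le> L - 1"
    and "\<forall>\<tau>'. 0 < \<tau>' \<and> \<tau>' \<le> (\<alpha> - 1/2 - \<delta>) - 1/2 \<longrightarrow>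
           wce (\<alpha> - 1/2 - \<delta>) \<gamma> (lattice_pt L gen) L
             \<le> ereal (Ccon \<gamma> (\<alpha> - 1/2 - \<delta>) \<tau>' * real L powr (- (\<alpha> - 1/2 - \<delta>) + \<tau>'))"
    and "m \<ge> 1"
  shows "cmod ((1 / of_nat N) * (\<Sum>n=1..N. complex_of_real (c n) * g (x n))
            - (1 / of_nat L) * (\<Sum>l<L. g (lattice_pt L gen l) * phiK (hypcross \<alpha> \<gamma> m) N c x (lattice_pt L gen l)))
          \<le> err1 g (hypcross \<alpha> \<gamma> m) N c x + err2 g (hypcross \<alpha> \<gamma> m) N c x (lattice_pt L gen) L
       \<and> err1 g (hypcross \<alpha> \<gamma> m) N c x + err2 g (hypcross \<alpha> \<gamma> m) N c x (lattice_pt L gen) L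
          \<le> A_norm \<alpha> \<gamma> g *
             (1 / sqrt (2 powr (real m - real CARD('n::{finite,linorder}) + 1))
              + sqrt (2 ^ m) / real L powr (\<alpha> - 1/2 - \<delta> - \<tau>)
                * c_const \<alpha> \<gamma> * zeta_const \<delta> CARD('n::{finite,linorder}) * Ccon \<gamma> (\<alpha> - 1/2 - \<delta>) \<tau>)
             * mu_bar N c"
proof -
  \<comment> \<open>Of the lattice only the worst-case error bound at \<open>\<tau>' = \<tau>\<close> is used.\<close>
  define \<beta> where "\<beta> = \<alpha> - 1/2 - \<delta>"
  have \<gamma>: "\<forall>j. 0 < \<gamma> j \<and> \<gamma> j \<le> 1"
    using assms(6,8) by blast
  have \<beta>: "\<beta> + 1/2 + \<delta> = \<alpha>" "0 \<le> \<beta>"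
    using assms(3) by (simp_all add: \<beta>_def)
  have err1: "err1 g (hypcross \<alpha> \<gamma> m) N c x
      \<le> A_norm \<alpha> \<gamma> g / sqrt (2 powr (real m - real CARD('n) + 1)) * mu_bar N c"
    using assms(1,8-10,12) by (intro err1_hypcross_le) auto
  have "wce \<beta> \<gamma> (lattice_pt L gen) L \<le> ereal (Ccon \<gamma> \<beta> \<tau> * real L powr (- \<beta> + \<tau>))"
    using assms(15) [rule_format, of \<tau>] assms(4,5) by (simp add: \<beta>_def)
  then have err2: "err2 g (hypcross \<alpha> \<gamma> m) N c x (lattice_pt L gen) L
      \<le> mu_bar N c * c_const \<alpha> \<gamma> * sqrt (2 ^ m) * A_norm \<alpha> \<gamma> g * zeta_const \<delta> CARD('n)
         * (Ccon \<gamma> \<beta> \<tau> * real L powr (- \<beta> + \<tau>))"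
    by (rule err2_hypcross_le [OF \<beta> assms(2) \<gamma> assms(9,10)])
  have "- \<beta> + \<tau> = - (\<alpha> - 1/2 - \<delta> - \<tau>)"
    by (simp add: \<beta>_def)
  then have L_powr: "real L powr (- \<beta> + \<tau>) = 1 / real L powr (\<alpha> - 1/2 - \<delta> - \<tau>)"
    by (simp only: powr_minus_divide)
  show ?thesis
    using err1 err2 L_powr
    by (intro conjI norm_error_le_err1_add_err2) (simp add: \<beta>_def algebra_simps)
qed

end
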